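(* Let $t\ge 3$ be an integer, let $G$ be a graph not containing $K_{3,t}$ as a subgraph, and let $\nabla$ be an integer with $\nabla>\nabla_1^B(G)$. Define $D_1=\{v\in V(G):$ for all $A\subseteq V(G)\setminus\{v\}$ with $N(v)\subseteq N[A]$ we have $|A|>2\nabla-1\}$, $R_1=V(G)\setminus N[D_1]$, $N_{R_1}(v)=N(v)\cap R_1$, $B_v=\{z\in V(G)\setminus\{v\}: |N_{R_1}(v)\cap N_{R_1}(z)|\ge(2\nabla-1)t+1\}$ for $v\in V(G)$, $W=\{v\in V(G): B_v\neq\emptyset\}$, $D_2=\bigcup_{v\in W}(\{v\}\cup B_v)$, and $R=V(G)\setminus N[D_1\cup D_2]$. Then for every $v\in V(G)$ we have $|N(v)\cap R|\le(2\nabla-1)^2t+(2\nabla-1)$.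
   Context: Graphs are finite, undirected and simple. $N(v)$ is the open neighbourhood of $v$, $N[v]=N(v)\cup\{v\}$, $N[A]=\bigcup_{a\in A}N[a]$. A $1$-shallow minor of $G$ is a graph obtained from $G$ by deleting vertices and edges and contracting pairwise vertex-disjoint connected subgraphs of radius at most $1$; $\nabla_1^B(G)$ is the maximum edge density $|E(H)|/|V(H)|$ of a bipartite $1$-shallow minor $H$ of $G$. $K_{3,t}$ is the complete bipartite graph with parts of sizes $3$ and $t$. *)

theory Defs
  imports Complex_Main
begin

definition graph :: "'a set \<Rightarrow> ('a \<Rightarrow> 'a \<Rightarrow> bool) \<Rightarrow> bool" where
  "graph V E \<longleftrightarrow> finite V \<and> (\<forall>u w. E u w \<longrightarrow> E w u)
     \<and> (\<forall>u. \<not> E u u) \<and> (\<forall>u w. E u w \<longrightarrow> u \<in> V \<and> w \<in> V)"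

definition nbh :: "'a set \<Rightarrow> ('a \<Rightarrow> 'a \<Rightarrow> bool) \<Rightarrow> 'a \<Rightarrow> 'a set" where
  "nbh V E v = {u \<in> V. E v u}"

definition cnbh :: "'a set \<Rightarrow> ('a \<Rightarrow> 'a \<Rightarrow> bool) \<Rightarrow> 'a set \<Rightarrow> 'a set" where
  "cnbh V E A = A \<union> (\<Union>a\<in>A. nbh V E a)"

definition num_edges :: "'b set \<Rightarrow> ('b \<Rightarrow> 'b \<Rightarrow> bool) \<Rightarrow> nat" where
  "num_edges VH EH = card {{x, y} | x y. x \<in> VH \<and> y \<in> VH \<and> EH x y}"

definition density :: "'b set \<Rightarrow> ('b \<Rightarrow> 'b \<Rightarrow> bool) \<Rightarrow> real" where
  "density VH EH = real (num_edges VH EH) / real (card VH)"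

definition bipartite :: "'b set \<Rightarrow> ('b \<Rightarrow> 'b \<Rightarrow> bool) \<Rightarrow> bool" where
  "bipartite VH EH \<longleftrightarrow> (\<exists>X \<subseteq> VH. \<forall>x y. EH x y \<longrightarrow> (x \<in> X \<longleftrightarrow> y \<notin> X))"

text \<open>H is a 1-shallow minor of G: there are pairwise disjoint nonempty branch
sets in V(G), each of radius at most 1 (a centre adjacent to all its other
vertices), such that every edge of H is realised by an edge of G between the
corresponding branch sets.\<close>
definition shallow_minor1 ::
  "'b set \<Rightarrow> ('b \<Rightarrow> 'b \<Rightarrow> bool) \<Rightarrow> 'a set \<Rightarrow> ('a \<Rightarrow> 'a \<Rightarrow> bool) \<Rightarrow> bool" where
  "shallow_minor1 VH EH V E \<longleftrightarrow> (\<exists>br :: 'b \<Rightarrow> 'a set.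
      (\<forall>x\<in>VH. br x \<subseteq> V \<and> (\<exists>c\<in>br x. \<forall>u\<in>br x. u \<noteq> c \<longrightarrow> E c u))
    \<and> (\<forall>x\<in>VH. \<forall>y\<in>VH. x \<noteq> y \<longrightarrow> br x \<inter> br y = {})
    \<and> (\<forall>x\<in>VH. \<forall>y\<in>VH. EH x y \<longrightarrow> (\<exists>u\<in>br x. \<exists>w\<in>br y. E u w)))"

text \<open>\<nabla>_1^B(G): maximum density of a bipartite 1-shallow minor. Minors have
at most |V(G)| vertices, so vertex type 'a suffices.\<close>
definition nabla1B :: "'a set \<Rightarrow> ('a \<Rightarrow> 'a \<Rightarrow> bool) \<Rightarrow> real" where
  "nabla1B V E = Sup {density VH EH | (VH :: 'a set) EH.
      graph VH EH \<and> bipartite VH EH \<and> shallow_minor1 VH EH V E}"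

definition has_K3t :: "'a set \<Rightarrow> ('a \<Rightarrow> 'a \<Rightarrow> bool) \<Rightarrow> nat \<Rightarrow> bool" where
  "has_K3t V E t \<longleftrightarrow> (\<exists>A B. A \<subseteq> V \<and> B \<subseteq> V \<and> A \<inter> B = {} \<and> card A = 3 \<and>
      finite B \<and> card B = t \<and> (\<forall>a\<in>A. \<forall>b\<in>B. E a b))"

end

theory Submission
  imports Defs
begin

text \<open>If v is not in D1, it has a dominating set A of its neighbourhood with
|A| \<le> 2\<nabla> - 1; if v is not in D2, no vertex of A shares more than (2\<nabla> - 1)t
neighbours in R1 \<supseteq> R with v. Counting N(v) \<inter> R through A gives the bound, and
if v lies in D1 \<union> D2 then N(v) \<inter> R is empty.\<close>

lemma card_le_card_plus_sum_nbh_inter: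
  assumes "finite V" "finite A" "X \<subseteq> cnbh V E A"
  shows "card X \<le> card A + (\<Sum>a\<in>A. card (nbh V E a \<inter> X))"
proof -
  have "X \<subseteq> A \<union> (\<Union>a\<in>A. nbh V E a \<inter> X)"
    using assms(3) unfolding cnbh_def by blast
  then have "card X \<le> card (A \<union> (\<Union>a\<in>A. nbh V E a \<inter> X))"
    using assms(1,2) by (intro card_mono) (auto simp: nbh_def)
  also have "\<dots> \<le> card A + card (\<Union>a\<in>A. nbh V E a \<inter> X)"
    by (rule card_Un_le)
  also have "\<dots> \<le> card A + (\<Sum>a\<in>A. card (nbh V E a \<inter> X))"
    using card_UN_le[OF assms(2), of "\<lambda>a. nbh V E a \<inter> X"] by simp
  finally show ?thesis .
qed

lemma card_le_of_dominating_set: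
  assumes "finite V" "finite A" "X \<subseteq> cnbh V E A" "card A \<le> k"
    and "\<And>a. a \<in> A \<Longrightarrow> card (nbh V E a \<inter> X) \<le> m"
  shows "card X \<le> k + k * m"
proof -
  have "(\<Sum>a\<in>A. card (nbh V E a \<inter> X)) \<le> card A * m"
    using sum_mono[of A _ "\<lambda>_. m"] assms(5) by simp
  also have "\<dots> \<le> k * m"
    using assms(4) by simp
  finally show ?thesis
    using card_le_card_plus_sum_nbh_inter[OF assms(1-3)] assms(4) by linarith
qed

lemma square_times_plus_nonneg:
  fixes k :: int and t :: nat
  assumes "t \<ge> 1"
  shows "0 \<le> k\<^sup>2 * int t + k"
proof -
  have "k\<^sup>2 \<le> k\<^sup>2 * int t"
    using assms by (simp add: mult_le_cancel_left1)
  moreover have "0 \<le> k * (k + 1)"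
    by (cases "k \<ge> 0") (auto simp: mult_nonpos_nonpos zero_le_mult_iff)
  ultimately show ?thesis
    by (simp add: power2_eq_square algebra_simps)
qed

lemma card_nbh_inter_le_if_dominated:
  fixes k :: int
  assumes "finite V" "finite A" "nbh V E v \<subseteq> cnbh V E A" "int (card A) \<le> k"
    and "\<And>a. a \<in> A \<Longrightarrow> int (card (nbh V E a \<inter> (nbh V E v \<inter> R))) \<le> k * int t"
  shows "int (card (nbh V E v \<inter> R)) \<le> k\<^sup>2 * int t + k"
proof -
  define n where "n = nat k"
  have k: "k = int n"
    using assms(4) unfolding n_def by linarith
  have "card (nbh V E a \<inter> (nbh V E v \<inter> R)) \<le> n * t" if "a \<in> A" for a
    using assms(5)[OF that] unfolding k by (simp only: of_nat_mult[symmetric] of_nat_le_iff)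
  then have "card (nbh V E v \<inter> R) \<le> n + n * (n * t)"
    using assms(1-4) unfolding k by (intro card_le_of_dominating_set) auto
  then have "int (card (nbh V E v \<inter> R)) \<le> int n + int n * (int n * int t)"
    by (simp only: of_nat_mult[symmetric] of_nat_add[symmetric] of_nat_le_iff)
  then show ?thesis
    unfolding k by (simp add: power2_eq_square algebra_simps)
qed

theorem lemma35:
  fixes V :: "'a set" and E :: "'a \<Rightarrow> 'a \<Rightarrow> bool" and t :: nat and nb :: int
  assumes "graph V E"
    and "t \<ge> 3"
    and "\<not> has_K3t V E t"
    and "real_of_int nb > nabla1B V E"
  defines "D1 \<equiv> {v \<in> V. \<forall>A. A \<subseteq> V - {v} \<and> nbh V E v \<subseteq> cnbh V E A
                   \<longrightarrow> int (card A) > 2 * nb - 1}"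
  defines "R1 \<equiv> V - cnbh V E D1"
  defines "B \<equiv> (\<lambda>v. {z \<in> V - {v}.
              int (card (nbh V E v \<inter> R1 \<inter> (nbh V E z \<inter> R1))) \<ge> (2 * nb - 1) * int t + 1})"
  defines "W \<equiv> {v \<in> V. B v \<noteq> {}}"
  defines "D2 \<equiv> (\<Union>v\<in>W. {v} \<union> B v)"
  defines "R \<equiv> V - cnbh V E (D1 \<union> D2)"
  shows "\<forall>v\<in>V. int (card (nbh V E v \<inter> R)) \<le> (2 * nb - 1)^2 * int t + (2 * nb - 1)"
proof
  fix v assume "v \<in> V"
  have "finite V"
    using assms(1) unfolding graph_def by blast
  show "int (card (nbh V E v \<inter> R)) \<le> (2 * nb - 1)^2 * int t + (2 * nb - 1)"
  proof (cases "v \<in> D1 \<union> D2")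
    case True
    then have "nbh V E v \<inter> R = {}"
      unfolding R_def cnbh_def by blast
    then show ?thesis
      using square_times_plus_nonneg[of t "2 * nb - 1"] assms(2) by simp
  next
    case False
    then obtain A where A: "A \<subseteq> V - {v}" "nbh V E v \<subseteq> cnbh V E A" "int (card A) \<le> 2 * nb - 1"
      using \<open>v \<in> V\<close> unfolding D1_def by (auto simp: not_less)
    have "int (card (nbh V E a \<inter> (nbh V E v \<inter> R))) \<le> (2 * nb - 1) * int t" if "a \<in> A" for a
    proof -
      have "a \<notin> B v"
        using False \<open>v \<in> V\<close> unfolding D2_def W_def by blast
      then have "int (card (nbh V E v \<inter> R1 \<inter> (nbh V E a \<inter> R1))) \<le> (2 * nb - 1) * int t"
        using that A(1) unfolding B_def by auto
      moreover have "card (nbh V E a \<inter> (nbh V E v \<inter> R)) \<le> card (nbh V E v \<inter> R1 \<inter> (nbh V E a \<inter> R1))"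
        using \<open>finite V\<close> unfolding R_def R1_def cnbh_def nbh_def by (intro card_mono) auto
      ultimately show ?thesis
        by linarith
    qed
    moreover have "finite A"
      using A(1) \<open>finite V\<close> finite_subset by blast
    ultimately show ?thesis
      using A(2,3) \<open>finite V\<close> by (intro card_nbh_inter_le_if_dominated) auto
  qed
qed

end
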